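(* Let $\upsilon$ be a positive integer, let $n,m$ be nonnegative integers, $N=\max\{n,m\}$, and let $p,q$ be real numbers with $p>(\upsilon+1)N+1$ and $q>-1$. Then $$\int_0^\infty \frac{x^{q}}{(1+x)^{p+q}}\,M_n(p,q,\upsilon;x)\,\mathfrak{M}_m(p,q,\upsilon;x)\,dx=\frac{n!\,\Gamma(p-n)\,\Gamma(q+1+\upsilon n)}{(p-1-n-\upsilon n)\,\Gamma(p+q-n)}\,\delta_{n,m},$$ where $\delta_{n,m}$ is the Kronecker delta.
   Context: $(a)_k=a(a+1)\cdots(a+k-1)$, $(a)_0=1$, denotes the Pochhammer symbol. For a positive integer $\upsilon$, a nonnegative integer $n$ and real parameters $p,q$ define $$M_n(p,q,\upsilon;x)=(-1)^n(q+1)_{\upsilon n}\sum_{j=0}^{n}(-1)^j\binom{n}{j}\frac{(n+1-p)_{\upsilon j}}{(q+1)_{\upsilon j}}(-x)^{\upsilon j},$$ $$\mathfrak{M}_n(p,q,\upsilon;x)=\sum_{r=0}^{n}\sum_{s=0}^{r}(-1)^{s+n}\binom{r}{s}\frac{(p+q-n)_r}{r!}\left(\frac{s+q+1}{\upsilon}\right)_n x^r(1+x)^{n-r}.$$ *)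

theory Defs
  imports "HOL-Analysis.Analysis"
begin

definition M_poly :: "nat \<Rightarrow> real \<Rightarrow> real \<Rightarrow> nat \<Rightarrow> real \<Rightarrow> real" where
  "M_poly n p q u x = (-1) ^ n * pochhammer (q + 1) (u * n) *
     (\<Sum>j=0..n. (-1) ^ j * real (n choose j) *
        pochhammer (real n + 1 - p) (u * j) / pochhammer (q + 1) (u * j) * (- x) ^ (u * j))"

definition frakM_poly :: "nat \<Rightarrow> real \<Rightarrow> real \<Rightarrow> nat \<Rightarrow> real \<Rightarrow> real" where
  "frakM_poly n p q u x = (\<Sum>r=0..n. \<Sum>s=0..r.
     (-1) ^ (s + n) * real (r choose s) * pochhammer (p + q - real n) r / fact r *
     pochhammer ((real s + q + 1) / real u) n * x ^ r * (1 + x) ^ (n - r))"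

end

theory Submission
  imports Defs
begin

text \<open>
  Expanding \<open>M_n\<close> in the powers \<open>x^(\<upsilon> j)\<close>, every term is a moment of the weight against
  \<open>frakM_m\<close>. Expanding \<open>frakM_m\<close> in turn, each of its terms integrates to a Beta value, and
  the double sum over \<open>r, s\<close> becomes a Newton series of finite differences of the degree-\<open>m\<close>
  polynomial \<open>s \<mapsto> ((s+q+1)/\<upsilon>)_m\<close>; it therefore evaluates that polynomial at
  \<open>s = -(q+1+\<upsilon> j)\<close>, which gives \<open>(-j)_m\<close>. The integral thus reduces to an alternating
  binomial sum \<open>\<Sum>_j (-1)^j C(n,j) \<Gamma>(p-m-1-\<upsilon> j)/\<Gamma>(p-n-\<upsilon> j) (-j)_m\<close>. For \<open>n < m\<close> every
  factor \<open>(-j)_m\<close> vanishes; for \<open>n > m\<close> the summand is a polynomial of degree \<open>n-1\<close> in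
  \<open>j\<close>, so its \<open>n\<close>-th finite difference vanishes; for \<open>n = m\<close> only \<open>j = n\<close> survives.
\<close>

text \<open>
  Polynomial functions of degree at most \<open>d\<close>, written in the basis
  \<open>(-x)_k = (-1)^k x(x-1)\<cdots>(x-k+1)\<close>, in which finite differences at the integers are diagonal.
\<close>
definition falling_poly :: "nat \<Rightarrow> (real \<Rightarrow> real) \<Rightarrow> bool" where
  "falling_poly d f \<longleftrightarrow> (\<exists>c. \<forall>x. f x = (\<Sum>k\<le>d. c k * pochhammer (-x) k))"

lemma falling_poly_const: "falling_poly 0 (\<lambda>x. a)"
  unfolding falling_poly_def by (rule exI[of _ "\<lambda>_. a"]) simp

lemma falling_poly_mult_linear:
  assumes "falling_poly d f"
  shows "falling_poly (Suc d) (\<lambda>x. f x * (\<alpha> + \<beta> * x))"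
proof -
  from assms obtain c where c: "\<And>x. f x = (\<Sum>k\<le>d. c k * pochhammer (-x) k)"
    unfolding falling_poly_def by blast
  define c' where "c' k = (if k \<le> d then c k * (\<alpha> + \<beta> * real k) else 0)
       - (if k = 0 then 0 else \<beta> * c (k - 1))" for k
  have "f x * (\<alpha> + \<beta> * x) = (\<Sum>k\<le>Suc d. c' k * pochhammer (-x) k)" for x
  proof -
    have "f x * (\<alpha> + \<beta> * x) = (\<Sum>k\<le>d. c k * (\<alpha> + \<beta> * real k) * pochhammer (-x) k)
          - (\<Sum>k\<le>d. \<beta> * c k * pochhammer (-x) (Suc k))"
      unfolding c sum_distrib_right sum_subtractf[symmetric]
      by (intro sum.cong refl) (simp add: pochhammer_Suc algebra_simps)
    also have "(\<Sum>k\<le>d. \<beta> * c k * pochhammer (-x) (Suc k)) =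
        (\<Sum>k\<le>Suc d. (if k = 0 then 0 else \<beta> * c (k - 1)) * pochhammer (-x) k)"
      by (subst sum.atMost_Suc_shift) simp
    finally show ?thesis
      unfolding c'_def by (simp add: sum_subtractf algebra_simps)
  qed
  then show ?thesis unfolding falling_poly_def by blast
qed

lemma falling_poly_mult_pochhammer:
  assumes "falling_poly d f"
  shows "falling_poly (d + t) (\<lambda>x. f x * pochhammer (A + B * x) t)"
proof (induction t)
  case 0
  then show ?case using assms by simp
next
  case (Suc t)
  from falling_poly_mult_linear[OF Suc, of "A + real t" B] show ?case
    by (simp add: pochhammer_Suc algebra_simps)
qed

lemma sum_alternating_choose_mult_choose:
  "(\<Sum>s\<le>r. (-1::real)^s * real (r choose s) * real (s choose k)) = (if r = k then (-1)^k else 0)"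
proof (cases "k \<le> r")
  case False
  then show ?thesis by (auto intro!: sum.neutral)
next
  case True
  have "(\<Sum>s\<le>r. (-1::real)^s * real (r choose s) * real (s choose k)) =
        (\<Sum>s\<in>{k..r}. (-1)^s * real (r choose k) * real ((r - k) choose (s - k)))"
    by (rule sum.mono_neutral_cong_right)
       (auto simp: choose_mult of_nat_mult[symmetric] simp del: of_nat_mult)
  also have "\<dots> = (\<Sum>t\<le>r - k. (-1)^(t + k) * real (r choose k) * real ((r - k) choose t))"
    using True by (intro sum.reindex_bij_witness[of _ "\<lambda>t. t + k" "\<lambda>s. s - k"]) auto
  also have "\<dots> = (-1)^k * real (r choose k) * (\<Sum>t\<le>r - k. (-1)^t * real ((r - k) choose t))"
    by (simp add: sum_distrib_left power_add mult_ac)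
  also have "\<dots> = (if r = k then (-1)^k else 0)"
    using True by (auto simp: choose_alternating_sum)
  finally show ?thesis .
qed

lemma pochhammer_minus_of_nat:
  "pochhammer (- real s) k = (-1)^k * fact k * real (s choose k)"
  by (simp add: binomial_gbinomial gbinomial_pochhammer flip: power_mult_distrib)

lemma sum_alternating_choose_mult_pochhammer:
  "(\<Sum>s\<le>r. (-1::real)^s * real (r choose s) * pochhammer (- real s) k) = (if r = k then fact k else 0)"
proof -
  have "(\<Sum>s\<le>r. (-1::real)^s * real (r choose s) * pochhammer (- real s) k) =
      (-1)^k * fact k * (\<Sum>s\<le>r. (-1)^s * real (r choose s) * real (s choose k))"
    by (simp add: pochhammer_minus_of_nat sum_distrib_left mult_ac)
  then show ?thesis
    by (simp add: sum_alternating_choose_mult_choose flip: power_mult_distrib)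
qed

lemma sum_alternating_choose_falling_expansion:
  assumes f: "\<And>x. f x = (\<Sum>k\<le>d. c k * pochhammer (-x) k)"
  shows "(\<Sum>s\<le>r. (-1)^s * real (r choose s) * f (real s)) = (if r \<le> d then fact r * c r else 0)"
proof -
  have "(\<Sum>s\<le>r. (-1)^s * real (r choose s) * f (real s)) =
      (\<Sum>k\<le>d. c k * (\<Sum>s\<le>r. (-1)^s * real (r choose s) * pochhammer (- real s) k))"
    unfolding f sum_distrib_left by (subst sum.swap) (simp add: mult_ac)
  also have "\<dots> = (\<Sum>k\<le>d. if k = r then fact r * c r else 0)"
    by (intro sum.cong refl) (auto simp: sum_alternating_choose_mult_pochhammer)
  also have "\<dots> = (if r \<le> d then fact r * c r else 0)"
    by simp
  finally show ?thesis .
qed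

lemma falling_poly_sum_alternating_choose_eq_0:
  assumes "falling_poly d f" "d < n"
  shows "(\<Sum>j\<le>n. (-1)^j * real (n choose j) * f (real j)) = 0"
  using assms sum_alternating_choose_falling_expansion[where r = n]
  unfolding falling_poly_def by auto

lemma falling_poly_newton_series:
  assumes "falling_poly d f" "d \<le> m"
  shows "(\<Sum>r\<le>m. pochhammer a r / fact r *
            (\<Sum>s\<le>r. (-1)^s * real (r choose s) * f (real s))) = f (-a)"
proof -
  from assms(1) obtain c where c: "\<And>x. f x = (\<Sum>k\<le>d. c k * pochhammer (-x) k)"
    unfolding falling_poly_def by blast
  have "(\<Sum>r\<le>m. pochhammer a r / fact r *
            (\<Sum>s\<le>r. (-1)^s * real (r choose s) * f (real s))) =
      (\<Sum>r\<le>m. if r \<le> d then c r * pochhammer a r else 0)"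
    unfolding sum_alternating_choose_falling_expansion[OF c] by (intro sum.cong) auto
  also have "\<dots> = (\<Sum>r\<le>d. c r * pochhammer a r)"
    using assms(2) by (simp add: sum.If_cases Int_absorb1 flip: atMost_def)
  also have "\<dots> = f (-a)"
    by (simp add: c)
  finally show ?thesis .
qed

lemma Gamma_add_of_nat:
  assumes "(x::real) > 0"
  shows "Gamma (x + real k) = pochhammer x k * Gamma x"
proof -
  have "x \<notin> \<int>\<^sub>\<le>\<^sub>0"
    using assms by (auto dest: nonpos_Ints_nonpos)
  then show ?thesis
    using Gamma_real_pos[OF assms] by (simp add: pochhammer_Gamma)
qed

lemma pochhammer_one_minus_eq_Gamma_ratio:
  assumes "a - real k > 0"
  shows "(-1)^k * pochhammer (1 - a) k = Gamma a / Gamma (a - real k)"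
proof -
  have "pochhammer (1 - a) k = (-1)^k * pochhammer (a - real k) k"
    using pochhammer_minus[of "a - 1" k] by simp
  moreover have "Gamma a = pochhammer (a - real k) k * Gamma (a - real k)"
    using Gamma_add_of_nat[OF assms, of k] by simp
  ultimately show ?thesis
    using Gamma_real_pos[OF assms] by (simp flip: power_mult_distrib)
qed

lemma powr_weight_mult_binomial_term:
  fixes x a b :: real
  assumes "x > 0" "r \<le> m"
  shows "x powr a / (1 + x) powr b * (x ^ r * (1 + x) ^ (m - r)) =
         x powr (a + real r) / (1 + x) powr (b - real m + real r)"
proof -
  have "(1 + x) ^ (m - r) = (1 + x) powr (real m - real r)"
    using assms by (simp add: of_nat_diff flip: powr_realpow)
  then show ?thesis
    using assms by (simp add: powr_add powr_diff powr_realpow field_simps)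
qed

lemma Beta_halfline_substitution:
  fixes a b t :: real
  assumes "0 < t" "t < 1"
  shows "1 / (1 - t)^2 * ((t / (1 - t)) powr (a - 1) / (1 + t / (1 - t)) powr (a + b)) =
         t powr (a - 1) * (1 - t) powr (b - 1)"
proof -
  have "1 + t / (1 - t) = 1 / (1 - t)" and "(1 - t)^2 = (1 - t) powr 2"
    using assms by (simp_all add: field_simps powr_realpow)
  moreover have "(1 - t) powr (a + b) = (1 - t) powr (b - 1) * ((1 - t) powr (a - 1) * (1 - t) powr 2)"
    by (simp add: algebra_simps flip: powr_add)
  ultimately show ?thesis
    using assms by (simp add: powr_divide field_simps)
qed

lemma has_integral_Beta_halfline:
  fixes a b :: real
  assumes "a > 0" "b > 0"
  shows "((\<lambda>x. x powr (a - 1) / (1 + x) powr (a + b)) has_integral Beta a b) {0<..}"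
proof -
  define g where "g t = t / (1 - t)" for t :: real
  define g' where "g' t = 1 / (1 - t)^2" for t :: real
  define f where "f x = x powr (a - 1) / (1 + x) powr (a + b)" for x :: real
  have "(g has_real_derivative g' t) (at t within {0<..<1})" if "t \<in> {0<..<1}" for t
    using that unfolding g_def g'_def
    by (auto intro!: derivative_eq_intros simp: field_simps power2_eq_square)
  moreover have "inj_on g {0<..<1}"
    unfolding g_def inj_on_def by (auto simp: field_simps)
  ultimately have change: "(\<lambda>t. \<bar>g' t\<bar> * f (g t)) absolutely_integrable_on {0<..<1} \<and>
        integral {0<..<1} (\<lambda>t. \<bar>g' t\<bar> * f (g t)) = Beta a b \<longleftrightarrow>
      f absolutely_integrable_on g ` {0<..<1} \<and> integral (g ` {0<..<1}) f = Beta a b"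
    by (intro has_absolute_integral_change_of_variables_1') auto
  have image: "g ` {0<..<1} = {0<..}"
  proof (intro equalityI subsetI)
    fix x :: real assume "x \<in> {0<..}"
    then have "x / (1 + x) \<in> {0<..<1}" "g (x / (1 + x)) = x"
      unfolding g_def by (auto simp: field_simps)
    then show "x \<in> g ` {0<..<1}"
      by (metis image_eqI)
  qed (auto simp: g_def)
  have jacobian: "t powr (a - 1) * (1 - t) powr (b - 1) = \<bar>g' t\<bar> * f (g t)"
    if "t \<in> {0<..<1}" for t
    using Beta_halfline_substitution[of t a b] that unfolding g_def g'_def f_def by simp
  have "((\<lambda>t. t powr (a - 1) * (1 - t) powr (b - 1)) has_integral Beta a b) {0<..<1}"
    using has_integral_Beta_real[OF assms] by (simp add: has_integral_Icc_iff_Ioo)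
  then have transformed: "((\<lambda>t. \<bar>g' t\<bar> * f (g t)) has_integral Beta a b) {0<..<1}"
    by (rule has_integral_eq[OF jacobian, rotated])
  moreover have "\<bar>g' t\<bar> * f (g t) \<ge> 0" if "t \<in> {0<..<1}" for t
    using jacobian[OF that, symmetric] that by simp
  ultimately have "(\<lambda>t. \<bar>g' t\<bar> * f (g t)) absolutely_integrable_on {0<..<1}"
    by (subst absolutely_integrable_on_iff_nonneg) auto
  with transformed change have "f absolutely_integrable_on {0<..}" "integral {0<..} f = Beta a b"
    unfolding image by (auto dest: integral_unique)
  then show ?thesis
    unfolding f_def by (metis set_lebesgue_integral_eq_integral(1) integrable_integral)
qed

lemma frakM_poly_weighted_eq_sum:
  fixes x e P :: real
  assumes "x > 0"
  shows "x powr e / (1 + x) powr P * frakM_poly m p q u x =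
    (\<Sum>r=0..m. \<Sum>s=0..r. (-1)^(s + m) * real (r choose s) *
       pochhammer (p + q - real m) r / fact r * pochhammer ((real s + q + 1) / real u) m *
       (x powr (e + real r) / (1 + x) powr (P - real m + real r)))"
    (is "_ = ?rhs")
proof -
  have "x powr e / (1 + x) powr P * frakM_poly m p q u x =
      (\<Sum>r=0..m. \<Sum>s=0..r. (-1)^(s + m) * real (r choose s) *
         pochhammer (p + q - real m) r / fact r * pochhammer ((real s + q + 1) / real u) m *
         (x powr e / (1 + x) powr P * (x ^ r * (1 + x) ^ (m - r))))"
    unfolding frakM_poly_def sum_distrib_left by (simp add: mult_ac)
  also have "\<dots> = ?rhs"
    using assms by (intro sum.cong refl) (simp only: powr_weight_mult_binomial_term atLeastAtMost_iff)
  finally show ?thesis .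
qed

lemma frakM_poly_moment:
  fixes t p q :: real
  assumes "q + t > -1" "p - real m - 1 - t > 0"
  shows "((\<lambda>x. x powr (q + t) / (1 + x) powr (p + q) * frakM_poly m p q u x) has_integral
     ((-1)^m * Gamma (q + 1 + t) * Gamma (p - real m - 1 - t) / Gamma (p + q - real m)
       * pochhammer (- t / real u) m)) {0<..}"
proof -
  define a where "a = q + 1 + t"
  define c where "c = p + q - real m"
  define b where "b = p - real m - 1 - t"
  define f where "f s = pochhammer ((s + q + 1) / real u) m" for s
  define co where "co r s = (-1)^(s + m) * real (r choose s) * pochhammer c r / fact r * f (real s)"
    for r s
  define I where "I r = Gamma (a + real r) * Gamma b / Gamma (c + real r)" for r
  have a: "a > 0" and b: "b > 0" and c: "c > 0"
    using assms unfolding a_def b_def c_def by linarith+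
  have termwise: "((\<lambda>x. \<Sum>r=0..m. \<Sum>s=0..r. co r s * (x powr (q + t + real r) / (1 + x) powr (c + real r)))
      has_integral (\<Sum>r=0..m. \<Sum>s=0..r. co r s * I r)) {0<..}"
  proof (intro has_integral_sum has_integral_mult_right)
    fix r
    have "q + t + real r = a + real r - 1" "c + real r = a + real r + b"
      unfolding a_def b_def c_def by simp_all
    then show "((\<lambda>x. x powr (q + t + real r) / (1 + x) powr (c + real r)) has_integral I r) {0<..}"
      using has_integral_Beta_halfline[of "a + real r" b] a b
      unfolding I_def Beta_def by (simp only:)
  qed auto
  have integrand: "x powr (q + t) / (1 + x) powr (p + q) * frakM_poly m p q u x =
      (\<Sum>r=0..m. \<Sum>s=0..r. co r s * (x powr (q + t + real r) / (1 + x) powr (c + real r)))"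
    if "x \<in> {0<..}" for x
    using frakM_poly_weighted_eq_sum[of x "q + t" "p + q" m p q u] that
    unfolding co_def f_def c_def by simp
  have coefficient: "co r s * I r = (-1)^m * Gamma a * Gamma b / Gamma c *
      (pochhammer a r / fact r * ((-1)^s * real (r choose s) * f (real s)))" for r s
    using Gamma_add_of_nat[OF a, of r] Gamma_add_of_nat[OF c, of r] pochhammer_pos[OF c, of r]
      Gamma_real_pos[OF c]
    unfolding co_def I_def by (simp add: field_simps power_add)
  txt \<open>
    The sum over \<open>s\<close> is an \<open>r\<close>-th finite difference of \<open>f\<close>, the sum over \<open>r\<close>
    its Newton series.
  \<close>
  have "falling_poly m f"
  proof -
    have "f = (\<lambda>s. 1 * pochhammer ((q + 1) / real u + 1 / real u * s) m)"
      unfolding f_def by (simp add: add_divide_distrib add_ac)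
    then show ?thesis
      using falling_poly_mult_pochhammer[OF falling_poly_const, where t = m] by (simp only: add_0)
  qed
  then have "(\<Sum>r\<le>m. pochhammer a r / fact r *
      (\<Sum>s\<le>r. (-1)^s * real (r choose s) * f (real s))) = pochhammer (- t / real u) m"
    using falling_poly_newton_series[of m f m a] by (simp add: f_def a_def)
  then have "(\<Sum>r=0..m. \<Sum>s=0..r. co r s * I r) =
      (-1)^m * Gamma a * Gamma b / Gamma c * pochhammer (- t / real u) m"
    by (simp only: coefficient sum_distrib_left[symmetric] atLeast0AtMost)
  with has_integral_eq[OF integrand[symmetric] termwise] show ?thesis
    unfolding a_def b_def c_def by simp
qed

lemma M_poly_weighted_eq_sum:
  fixes x e P y :: real
  assumes "x > 0"
  shows "x powr e / (1 + x) powr P * M_poly n p q u x * y =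
    (\<Sum>j=0..n. (-1)^n * pochhammer (q + 1) (u * n) * (-1)^j * real (n choose j) *
       ((-1)^(u * j) * pochhammer (real n + 1 - p) (u * j)) / pochhammer (q + 1) (u * j) *
       (x powr (e + real (u * j)) / (1 + x) powr P * y))"
proof -
  have "x powr e * x ^ (u * j) = x powr (e + real (u * j))" for j
    using assms powr_realpow[of x "u * j"] by (simp add: powr_add)
  then show ?thesis
    unfolding M_poly_def sum_distrib_left sum_distrib_right
    by (intro sum.cong refl) (simp add: power_minus[of x] field_simps)
qed

lemma M_poly_frakM_poly_has_integral:
  fixes u n m :: nat and p q :: real
  assumes u: "u > 0" and q: "q > -1"
    and pm: "p > real m + 1 + real (u * n)" and pn: "p > real n + real (u * n)"
  shows "((\<lambda>x. x powr q / (1 + x) powr (p + q) * M_poly n p q u x * frakM_poly m p q u x)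
    has_integral ((-1)^(n + m) * Gamma (q + 1 + real (u * n)) * Gamma (p - real n) / Gamma (p + q - real m) *
      (\<Sum>j\<le>n. (-1)^j * real (n choose j) * Gamma (p - real m - 1 - real (u * j)) /
          Gamma (p - real n - real (u * j)) * pochhammer (- real j) m))) {0<..}"
proof -
  define c where "c j = (-1)^n * pochhammer (q + 1) (u * n) * (-1)^j * real (n choose j) *
      ((-1)^(u * j) * pochhammer (real n + 1 - p) (u * j)) / pochhammer (q + 1) (u * j)" for j
  define F where "F j x = x powr (q + real (u * j)) / (1 + x) powr (p + q) * frakM_poly m p q u x"
    for j x
  define K where "K j = (-1)^m * Gamma (q + 1 + real (u * j)) * Gamma (p - real m - 1 - real (u * j))
      / Gamma (p + q - real m) * pochhammer (- real j) m" for j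
  have uj: "real (u * j) \<le> real (u * n)" if "j \<le> n" for j
    using that by (simp add: mult_left_mono)
  have termwise: "((\<lambda>x. \<Sum>j=0..n. c j * F j x) has_integral (\<Sum>j=0..n. c j * K j)) {0<..}"
  proof (intro has_integral_sum has_integral_mult_right)
    fix j assume "j \<in> {0..n}"
    then have "real (u * j) \<le> real (u * n)"
      by (intro uj) simp
    then have "q + real (u * j) > -1" "p - real m - 1 - real (u * j) > 0"
      using q pm of_nat_0_le_iff[of "u * j"] by linarith+
    from frakM_poly_moment[OF this, of u] show "(F j has_integral K j) {0<..}"
      unfolding F_def K_def using u by (simp add: add_ac)
  qed auto
  have integrand: "x powr q / (1 + x) powr (p + q) * M_poly n p q u x * frakM_poly m p q u x =
      (\<Sum>j=0..n. c j * F j x)" if "x \<in> {0<..}" for x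
    using M_poly_weighted_eq_sum[where e = q and P = "p + q" and y = "frakM_poly m p q u x"] that
    unfolding c_def F_def by simp
  have coefficient: "c j * K j = (-1)^(n + m) * Gamma (q + 1 + real (u * n)) * Gamma (p - real n) /
      Gamma (p + q - real m) * ((-1)^j * real (n choose j) * Gamma (p - real m - 1 - real (u * j)) /
          Gamma (p - real n - real (u * j)) * pochhammer (- real j) m)" if "j \<le> n" for j
  proof -
    have "(-1)^(u * j) * pochhammer (real n + 1 - p) (u * j) = Gamma (p - real n) / Gamma (p - real n - real (u * j))"
      using pochhammer_one_minus_eq_Gamma_ratio[of "p - real n" "u * j"] pn uj[OF that]
      by (simp add: algebra_simps)
    moreover have "Gamma (q + 1 + real (u * k)) = pochhammer (q + 1) (u * k) * Gamma (q + 1)" for k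
      using Gamma_add_of_nat[of "q + 1" "u * k"] q by simp
    moreover have "pochhammer (q + 1) (u * j) > 0" "Gamma (q + 1) > 0"
      using q by (simp_all add: pochhammer_pos)
    ultimately show ?thesis
      unfolding c_def K_def by (simp add: field_simps power_add)
  qed
  from has_integral_eq[OF integrand[symmetric] termwise] show ?thesis
    by (simp add: coefficient sum_distrib_left atLeast0AtMost)
qed

lemma sum_alternating_Gamma_ratio_eq_0:
  fixes u n m :: nat and p :: real
  assumes "m < n" and pn: "p > real n + real (u * n)"
  shows "(\<Sum>j\<le>n. (-1)^j * real (n choose j) * Gamma (p - real m - 1 - real (u * j)) /
            Gamma (p - real n - real (u * j)) * pochhammer (- real j) m) = 0"
proof -
  define g where "g x = pochhammer (-x) m * pochhammer ((p - real n) + (- real u) * x) (n - m - 1)"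
    for x
  have "falling_poly m (\<lambda>x. pochhammer (-x) m)"
    using falling_poly_mult_pochhammer[OF falling_poly_const[of 1], where A = 0 and B = "-1"]
    by simp
  then have g_poly: "falling_poly (m + (n - m - 1)) g"
    unfolding g_def by (rule falling_poly_mult_pochhammer)
  have ratio: "Gamma (p - real m - 1 - real (u * j)) / Gamma (p - real n - real (u * j)) =
      pochhammer (p - real n + - real u * real j) (n - m - 1)" if "j \<le> n" for j
  proof -
    have "real (u * j) \<le> real (u * n)"
      using that by (simp add: mult_left_mono)
    then have pos: "p - real n - real (u * j) > 0"
      using pn by linarith
    have shift: "p - real n - real (u * j) + real (n - m - 1) = p - real m - 1 - real (u * j)"
      using \<open>m < n\<close> by (simp add: of_nat_diff)
    have "Gamma (p - real m - 1 - real (u * j)) =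
        pochhammer (p - real n - real (u * j)) (n - m - 1) * Gamma (p - real n - real (u * j))"
      using Gamma_add_of_nat[OF pos, of "n - m - 1"] unfolding shift .
    then show ?thesis
      using Gamma_real_pos[OF pos] by (simp add: algebra_simps)
  qed
  have "(\<Sum>j\<le>n. (-1)^j * real (n choose j) * Gamma (p - real m - 1 - real (u * j)) /
            Gamma (p - real n - real (u * j)) * pochhammer (- real j) m) =
      (\<Sum>j\<le>n. (-1)^j * real (n choose j) * g (real j))"
  proof (intro sum.cong refl)
    fix j assume "j \<in> {..n}"
    then show "(-1)^j * real (n choose j) * Gamma (p - real m - 1 - real (u * j)) /
            Gamma (p - real n - real (u * j)) * pochhammer (- real j) m =
        (-1)^j * real (n choose j) * g (real j)"
      unfolding g_def ratio[of j, symmetric, OF \<open>j \<in> {..n}\<close>[simplified]] by simp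
  qed
  also have "\<dots> = 0"
    using falling_poly_sum_alternating_choose_eq_0[OF g_poly] \<open>m < n\<close> by simp
  finally show ?thesis .
qed

lemma sum_alternating_Gamma_ratio:
  fixes u n m :: nat and p :: real
  assumes p: "p > real (u + 1) * real n + 1"
  shows "(\<Sum>j\<le>n. (-1)^j * real (n choose j) * Gamma (p - real m - 1 - real (u * j)) /
            Gamma (p - real n - real (u * j)) * pochhammer (- real j) m) =
         (if n = m then fact n / (p - 1 - real n - real (u * n)) else 0)"
proof (cases rule: linorder_cases[of n m])
  case less
  then show ?thesis
    by (auto simp: pochhammer_eq_0_iff intro!: sum.neutral)
next
  case equal
  define x where "x = p - real n - 1 - real (u * n)"
  have x: "x > 0"
    using p unfolding x_def by (simp add: algebra_simps)
  have "Gamma (x + 1) = x * Gamma x"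
    using Gamma_add_of_nat[OF x, of 1] by simp
  then have G: "Gamma (p - real n - real (u * n)) = x * Gamma x"
    unfolding x_def by (simp add: algebra_simps)
  have "(\<Sum>j\<le>n. (-1)^j * real (n choose j) * Gamma (p - real n - 1 - real (u * j)) /
            Gamma (p - real n - real (u * j)) * pochhammer (- real j) n) =
      (\<Sum>j\<in>{n}. (-1)^j * real (n choose j) * Gamma (p - real n - 1 - real (u * j)) /
            Gamma (p - real n - real (u * j)) * pochhammer (- real j) n)"
    by (intro sum.mono_neutral_right) (auto simp: pochhammer_eq_0_iff)
  also have "\<dots> = (-1)^n * real (n choose n) * Gamma (p - real n - 1 - real (u * n)) /
      Gamma (p - real n - real (u * n)) * pochhammer (- real n) n"
    by simp
  also have "\<dots> = (-1)^n * Gamma x / (x * Gamma x) * ((-1)^n * fact n)"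
    unfolding G x_def[symmetric] pochhammer_same by simp
  also have "\<dots> = fact n / x"
    using x Gamma_real_pos[OF x] by (simp add: less_imp_neq[THEN not_sym] flip: power_add)
  finally show ?thesis
    using equal unfolding x_def by (simp add: algebra_simps)
next
  case greater
  moreover have "p > real n + real (u * n)"
    using p by (simp add: algebra_simps)
  ultimately show ?thesis
    using sum_alternating_Gamma_ratio_eq_0 by simp
qed

theorem mainTheorem1:
  fixes u n m :: nat and p q :: real
  assumes "u > 0"
    and "p > real (u + 1) * real (max n m) + 1"
    and "q > -1"
  shows "((\<lambda>x. x powr q / (1 + x) powr (p + q) * M_poly n p q u x * frakM_poly m p q u x)
           has_integral
          (if n = m then fact n * Gamma (p - real n) * Gamma (q + 1 + real (u * n)) /
             ((p - 1 - real n - real (u * n)) * Gamma (p + q - real n)) else 0)) {0<..}"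
proof -
  have "real (u * n) \<le> real (u * max n m)"
    by (simp add: mult_left_mono)
  then have "p > real (u + 1) * real n + 1" "p > real m + 1 + real (u * n)" "p > real n + real (u * n)"
    using assms(2) by (auto simp: algebra_simps max_def split: if_splits)
  note integral = M_poly_frakM_poly_has_integral[OF assms(1,3) this(2,3)]
  have "(-1::real)^(n + n) = 1"
    by (simp flip: mult_2 add: power_mult)
  with integral show ?thesis
    unfolding sum_alternating_Gamma_ratio[OF \<open>p > real (u + 1) * real n + 1\<close>]
    by (cases "n = m") (simp_all add: field_simps)
qed

end
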